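(* In the standing setup below, every $\phi\in\mathrm{Dr}_1(\mathbf{A}_{\mathcal H},L)$ has the form $\phi_{\overline X}=\Delta\tau^2+g\tau+\gamma(\overline X)$ and $\phi_{\overline Y}=\beta\tau_L$, where $\Delta\in L^\times$, $g\in L$, $\beta\in\mathbb{F}_q^\times$. Moreover $\beta$ is a square root of $\alpha\,\mathrm{N}_{L/\mathbb{F}_q}(\Delta)\in\mathbb{F}_q^\times$, and $\beta$ is uniquely determined by $\Delta$ and $g$ (i.e. two modules in $\mathrm{Dr}_1(\mathbf{A}_{\mathcal H},L)$ with the same $\phi_{\overline X}$ coincide).
   Context: Standing setup: $\mathbb{F}_q$ is the finite field with $q$ elements. Let $d\ge5$ be odd, $m$ a positive divisor of $d$, $p\in\mathbb{F}_q[X]$ monic irreducible of degree $d/m$, $f=\alpha p^m$ with $\alpha\in\mathbb{F}_q^\times$, and $h\in\mathbb{F}_q[X]$ nonzero of degree $\le(d-1)/2$ and not divisible by $p$. Let $\xi=Y^2+h(X)Y-f(X)$ and assume the affine plane curve $\mathcal H:\xi=0$ is nonsingular. Let $\mathbf{A}_{\mathcal H}=\mathbb{F}_q[X][Y]/(\xi)$, $\mathfrak{p}=\langle p(\overline X),\overline Y\rangle$, $L$ a degree-$m$ extension of $\mathbf{A}_{\mathcal H}/\mathfrak{p}\simeq\mathbb{F}_q[X]/(p)$ (so $[L:\mathbb{F}_q]=d$), $\gamma:\mathbf{A}_{\mathcal H}\to\mathbf{A}_{\mathcal H}/\mathfrak{p}\hookrightarrow L$. $L\{\tau\}$ is the Ore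 polynomial ring with $\tau a=a^q\tau$; $\tau_L=\tau^d$. A Drinfeld $\mathbf{A}_{\mathcal H}$-module over $L$ is an $\mathbb{F}_q$-algebra morphism $\phi:\mathbf{A}_{\mathcal H}\to L\{\tau\}$ with constant coefficient of $\phi_a$ equal to $\gamma(a)$ and some $\phi_a$ nonconstant; it has rank $1$ if $\deg_\tau\phi_a=\deg(a)=\log_q\#(\mathbf{A}_{\mathcal H}/a\mathbf{A}_{\mathcal H})$ for all $a\neq0$; $\mathrm{Dr}_1(\mathbf{A}_{\mathcal H},L)$ is the set of these. $\mathrm{N}_{L/\mathbb{F}_q}$ is the field norm. *)

theory Defs
  imports "HOL-Library.Cardinality" "HOL-Computational_Algebra.Polynomial" "HOL-Algebra.Algebraic_Closure_Type"
begin

text \<open>Ore polynomials L{tau}, with tau a = a^q tau, are represented by ordinary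
  polynomials (coefficient i = coefficient of tau^i); addition is polynomial addition,
  multiplication is the twisted product below.\<close>

definition ore_mult :: "nat \<Rightarrow> 'l::field poly \<Rightarrow> 'l poly \<Rightarrow> 'l poly" where
  "ore_mult q A B = (\<Sum>i\<le>Polynomial.degree A. \<Sum>j\<le>Polynomial.degree B.
       Polynomial.monom (Polynomial.coeff A i * Polynomial.coeff B j ^ (q ^ i)) (i + j))"

definition fnorm :: "nat \<Rightarrow> nat \<Rightarrow> 'l::field \<Rightarrow> 'l" where
  "fnorm q d x = (\<Prod>i<d. x ^ (q ^ i))"

text \<open>Elements of F_q[X][Y] are 'k poly poly (outer variable Y, inner variable X).
  The variables X and Y:\<close>
definition varX :: "'k::comm_ring_1 poly poly" where "varX = [:[:0, 1:]:]"
definition varY :: "'k::comm_ring_1 poly poly" where "varY = [:0, 1:]"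

text \<open>gamma : A_H -> A_H/p -> L, induced by X |-> theta (a root of p in L), Y |-> 0.\<close>
definition gam :: "('k \<Rightarrow> 'l::field) \<Rightarrow> 'l \<Rightarrow> 'k::comm_ring_1 poly poly \<Rightarrow> 'l" where
  "gam \<iota> \<theta> P = poly (map_poly \<iota> (Polynomial.coeff P 0)) \<theta>"

text \<open>#(A_H / a A_H) for a represented by P: cardinality of F_q[X,Y]/(xi, P).\<close>
definition quot_card :: "'k::comm_ring_1 poly poly \<Rightarrow> 'k poly poly \<Rightarrow> nat" where
  "quot_card \<xi> P = card (UNIV // {(u, v). \<exists>r s. u - v = r * \<xi> + s * P})"

text \<open>Drinfeld A_H-modules over L of rank 1: F_q-algebra morphisms
  F_q[X][Y] -> L{tau} killing xi (= morphisms A_H -> L{tau}).\<close>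
definition Dr1 :: "nat \<Rightarrow> ('k::field \<Rightarrow> 'l::field) \<Rightarrow> 'l \<Rightarrow> 'k poly poly
                   \<Rightarrow> ('k poly poly \<Rightarrow> 'l poly) set" where
  "Dr1 q \<iota> \<theta> \<xi> = {\<phi>.
      (\<forall>P Q. \<phi> (P + Q) = \<phi> P + \<phi> Q) \<and>
      (\<forall>P Q. \<phi> (P * Q) = ore_mult q (\<phi> P) (\<phi> Q)) \<and>
      (\<forall>c. \<phi> [:[:c:]:] = [:\<iota> c:]) \<and>
      \<phi> \<xi> = 0 \<and>
      (\<forall>P. Polynomial.coeff (\<phi> P) 0 = gam \<iota> \<theta> P) \<and>
      (\<exists>P. Polynomial.degree (\<phi> P) > 0) \<and>
      (\<forall>P. \<not> \<xi> dvd P \<longrightarrow>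
           real (Polynomial.degree (\<phi> P)) = log (real q) (real (quot_card \<xi> P)))}"

end

theory Submission
  imports Defs
begin

text \<open>
  Write \<Delta> for the leading coefficient of \<phi>(X). Since F_q[X,Y]/(\<xi>, X) has q^2 elements,
  \<phi>(X) has \<tau>-degree 2, so \<phi> of a polynomial of degree n in X has degree 2n and leading
  coefficient \<Delta>^(1 + q^2 + ... + q^(2(n-1))). In the curve equation
  \<phi>(Y) (\<phi>(Y) + \<phi>(h)) = \<phi>(f) the term \<phi>(h) has degree < d, so \<phi>(Y) has degree d.
  Comparing lowest \<tau>-terms instead, the \<tau>-order of \<phi>(Y) equals that of \<phi>(f) = \<alpha> \<phi>(p)^m,
  i.e. m w for the \<tau>-order w of \<phi>(p); as \<phi>(p) commutes with \<phi>(X), whose constant term is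
  the root \<theta> of p, the element \<theta> is fixed by x \<mapsto> x^(q^w), whence deg p \<le> w. So \<phi>(Y) has
  \<tau>-order at least d and is a monomial \<beta> \<tau>^d. Commuting \<phi>(X) with \<phi>(Y) gives \<beta>^(q^2) = \<beta>,
  and as d is odd \<beta> lies in F_q. Leading coefficients in the curve equation give
  \<beta>^2 = \<alpha> \<Delta>^(1 + q^2 + ... + q^(2(d-1))), which is \<alpha> N(\<Delta>) because 2i mod d runs
  through all residues. Finally \<phi> is determined by \<phi>(X) on F_q[X], and \<beta> by the coefficient
  h(\<theta>) \<beta> of \<tau>^d in \<phi>(f), where h(\<theta>) \<noteq> 0.
\<close>

section \<open>Finite fields\<close>


lemma finite_field_power_card [simp]:
  fixes x :: "'a::{finite,field}"
  shows "x ^ CARD('a) = x"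
proof (cases "x = 0")
  case False
  let ?U = "UNIV - {0::'a}"
  have "(\<Prod>y\<in>?U. x * y) = \<Prod>?U"
    by (rule prod.reindex_bij_witness[of _ "\<lambda>y. y / x" "\<lambda>y. x * y"]) (use False in auto)
  then have "x ^ card ?U * \<Prod>?U = 1 * \<Prod>?U"
    by (simp add: prod.distrib)
  then have "x ^ (CARD('a) - 1) = 1"
    by (subst (asm) mult_cancel_right) (simp add: card_Diff_singleton)
  then show ?thesis
    by (metis finite_UNIV_card_ge_0 finite_class.finite_UNIV power_minus_mult mult_1)
qed simp

lemma finite_field_power_card_power [simp]:
  fixes x :: "'a::{finite,field}"
  shows "x ^ (CARD('a) ^ n) = x"
  by (induction n) (simp_all add: power_mult mult.commute[of "CARD('a)"])

lemma card_finite_field_ge_2: "CARD('a::{finite,field}) \<ge> 2"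
proof -
  have "card {0::'a, 1} \<le> CARD('a)" by (rule card_mono) auto
  then show ?thesis by simp
qed

lemma finite_field_binomial_card_eq_0:
  assumes "0 < j" "j < CARD('a::{finite,field})"
  shows "of_nat (CARD('a) choose j) = (0::'a)"
proof -
  let ?q = "CARD('a)"
  \<comment> \<open>every element is a root of (1 + X)^q - X^q - 1, which has degree < q, so it is zero\<close>
  define D :: "'a poly" where "D = [:1, 1:] ^ ?q - monom 1 ?q - 1"
  have "degree D \<le> ?q"
    unfolding D_def by (intro degree_diff_le) (auto simp: degree_power_eq degree_monom_le)
  moreover have "coeff D ?q = 0"
    using card_finite_field_ge_2[where 'a='a] by (simp add: D_def coeff_linear_power)
  ultimately have "D = 0 \<or> degree D < ?q"
    by (metis le_neq_implies_less leading_coeff_0_iff)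
  moreover have "{x. poly D x = 0} = UNIV"
    by (simp add: D_def poly_monom)
  ultimately have "D = 0"
    using card_poly_roots_bound[of D] by fastforce
  moreover have "coeff D j = of_nat (CARD('a) choose j)"
    using assms by (simp add: D_def coeff_linear_poly_power)
  ultimately show ?thesis
    by simp
qed

section \<open>Ring homomorphisms and Frobenius\<close>

locale comm_ring_hom =
  fixes f :: "'a::comm_ring_1 \<Rightarrow> 'b::comm_ring_1"
  assumes hom_add: "f (x + y) = f x + f y"
    and hom_mult: "f (x * y) = f x * f y"
    and hom_1: "f 1 = 1"
begin

lemma hom_0 [simp]: "f 0 = 0"
  using hom_add[of 0 0] by simp

lemma hom_uminus: "f (- x) = - f x"
  using hom_add[of x "- x"] by (simp add: eq_neg_iff_add_eq_0 add.commute)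

lemma hom_diff: "f (x - y) = f x - f y"
  using hom_add[of x "- y"] by (simp add: hom_uminus)

lemma hom_sum: "f (sum g A) = (\<Sum>a\<in>A. f (g a))"
  by (induction A rule: infinite_finite_induct) (simp_all add: hom_add)

lemma hom_power: "f (x ^ n) = f x ^ n"
  by (induction n) (simp_all add: hom_1 hom_mult)

lemma hom_of_nat: "f (of_nat n) = of_nat n"
  by (induction n) (simp_all add: hom_1 hom_add)

lemma comm_ring_hom_map_poly: "comm_ring_hom (map_poly f)"
proof
  show "map_poly f (p + q) = map_poly f p + map_poly f q" for p q
    by (rule poly_eqI) (simp add: coeff_map_poly hom_add)
  show "map_poly f (p * q) = map_poly f p * map_poly f q" for p q
    by (rule poly_eqI) (simp add: coeff_map_poly coeff_mult hom_sum hom_mult)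
qed (simp add: hom_1)

end

lemma comm_ring_hom_comp:
  "comm_ring_hom f \<Longrightarrow> comm_ring_hom g \<Longrightarrow> comm_ring_hom (\<lambda>x. g (f x))"
  by (simp add: comm_ring_hom_def)

lemma comm_ring_hom_poly: "comm_ring_hom (\<lambda>p. poly p x)"
  by unfold_locales simp_all

lemma comm_ring_hom_coeff_0: "comm_ring_hom (\<lambda>p. coeff p 0)"
  by unfold_locales (simp_all add: coeff_mult_0)

context
  fixes \<iota> :: "'a::{finite,field} \<Rightarrow> 'b::comm_ring_1"
  assumes \<iota>: "comm_ring_hom \<iota>"
begin

interpretation \<iota>: comm_ring_hom \<iota> by (rule \<iota>)

lemma power_card_add: "(x + y) ^ CARD('a) = x ^ CARD('a) + (y::'b) ^ CARD('a)"
proof -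
  let ?q = "CARD('a)"
  have "(x + y) ^ ?q = (\<Sum>k\<le>?q. of_nat (?q choose k) * x ^ k * y ^ (?q - k))"
    by (rule binomial_ring)
  also have "\<dots> = (\<Sum>k\<in>{0, ?q}. of_nat (?q choose k) * x ^ k * y ^ (?q - k))"
  proof (rule sum.mono_neutral_right)
    show "\<forall>k\<in>{..?q} - {0, ?q}. of_nat (?q choose k) * x ^ k * y ^ (?q - k) = 0"
      using finite_field_binomial_card_eq_0[where 'a='a]
      by (auto simp flip: \<iota>.hom_of_nat)
  qed auto
  finally show ?thesis
    using card_finite_field_ge_2[where 'a='a] by (simp add: add.commute)
qed

lemma power_card_power_add: "(x + y) ^ (CARD('a) ^ w) = x ^ (CARD('a) ^ w) + (y::'b) ^ (CARD('a) ^ w)"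
  by (induction w) (simp_all add: power_mult power_card_add mult.commute[of "CARD('a)"])

lemma power_card_power_sum: "(sum g A) ^ (CARD('a) ^ w) = (\<Sum>i\<in>A. (g i :: 'b) ^ (CARD('a) ^ w))"
  by (induction A rule: infinite_finite_induct) (simp_all add: power_card_power_add power_0_left)

lemma poly_map_poly_power_card_power:
  "poly (map_poly \<iota> a) x ^ (CARD('a) ^ w) = poly (map_poly \<iota> a) (x ^ (CARD('a) ^ w))"
proof -
  have "\<iota> c ^ (CARD('a) ^ w) = \<iota> c" for c
    by (simp flip: \<iota>.hom_power)
  then show ?thesis
    by (simp add: poly_altdef power_card_power_sum power_mult_distrib coeff_map_poly
        flip: power_mult) (simp add: power_mult mult.commute)
qed

end

lemma
  fixes N :: nat
  assumes "N \<ge> 2"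
  shows finite_power_eq_self: "finite {x::'a::idom. x ^ N = x}"
    and card_power_eq_self_le: "card {x::'a::idom. x ^ N = x} \<le> N"
proof -
  define Z :: "'a poly" where "Z = monom 1 N - [:0, 1:]"
  have "degree Z = N"
    unfolding Z_def diff_conv_add_uminus using assms
    by (subst degree_add_eq_left) (auto simp: degree_monom_eq)
  then have "Z \<noteq> 0"
    using assms by auto
  moreover have "{x. poly Z x = 0} = {x. x ^ N = x}"
    by (simp add: Z_def poly_monom)
  ultimately show "finite {x::'a. x ^ N = x}" "card {x::'a. x ^ N = x} \<le> N"
    using poly_roots_finite[of Z] card_poly_roots_bound[of Z] \<open>degree Z = N\<close> by auto
qed

lemma power_card_eq_self_imp_in_range:
  fixes \<iota> :: "'a::{finite,field} \<Rightarrow> 'b::field"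
  assumes "comm_ring_hom \<iota>" "inj \<iota>" and "y ^ CARD('a) = y"
  shows "y \<in> range \<iota>"
proof -
  interpret \<iota>: comm_ring_hom \<iota> by fact
  have "finite {x::'b. x ^ CARD('a) = x}"
    using card_finite_field_ge_2[where 'a='a] by (rule finite_power_eq_self)
  moreover have "range \<iota> \<subseteq> {x. x ^ CARD('a) = x}"
    by (auto simp flip: \<iota>.hom_power)
  moreover have "card {x::'b. x ^ CARD('a) = x} \<le> card (range \<iota>)"
    using card_power_eq_self_le[OF card_finite_field_ge_2] card_image[OF \<open>inj \<iota>\<close>] by simp
  ultimately have "range \<iota> = {x. x ^ CARD('a) = x}"
    by (rule card_seteq)
  with \<open>y ^ CARD('a) = y\<close> show ?thesis
    by blast
qed

section \<open>Roots of irreducible polynomials\<close>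

lemma comm_ring_hom_poly_map_poly:
  "comm_ring_hom \<iota> \<Longrightarrow> comm_ring_hom (\<lambda>c. poly (map_poly \<iota> c) \<theta>)"
  by (rule comm_ring_hom_comp[OF comm_ring_hom.comm_ring_hom_map_poly comm_ring_hom_poly])

lemma poly_map_poly_nonzero_if_not_dvd_irreducible:
  fixes \<iota> :: "'a::field \<Rightarrow> 'b::field"
  assumes "comm_ring_hom \<iota>" and p: "irreducible p" "poly (map_poly \<iota> p) \<theta> = 0"
    and "\<not> p dvd c"
  shows "poly (map_poly \<iota> c) \<theta> \<noteq> 0"
proof
  define E where "E c = poly (map_poly \<iota> c) \<theta>" for c
  interpret E: comm_ring_hom E
    unfolding E_def using assms(1) by (rule comm_ring_hom_poly_map_poly)
  assume "E c = 0"
  \<comment> \<open>a nonzero element of least degree in the kernel of E generates the kernel\<close>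
  have "p \<noteq> 0"
    using p(1) by auto
  then have "\<exists>n g. g \<noteq> 0 \<and> E g = 0 \<and> degree g = n"
    using p(2) by (auto simp: E_def)
  then obtain n where "\<exists>g. g \<noteq> 0 \<and> E g = 0 \<and> degree g = n"
    and least: "\<And>k. k < n \<Longrightarrow> \<not> (\<exists>g. g \<noteq> 0 \<and> E g = 0 \<and> degree g = k)"
    by (subst (asm) exists_least_iff) blast
  then obtain g where g: "g \<noteq> 0" "E g = 0" "degree g = n"
    by blast
  have g_dvd: "g dvd a" if "E a = 0" for a
  proof -
    have "E (a mod g) = E a - E (a div g) * E g"
      by (simp flip: minus_div_mult_eq_mod add: E.hom_diff E.hom_mult)
    with that g(2) have "E (a mod g) = 0"
      by simp
    then have "a mod g = 0"
      using least[of "degree (a mod g)"] degree_mod_less'[OF g(1)] g(3) by blast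
    then show ?thesis
      by (rule mod_0_imp_dvd)
  qed
  then obtain k where "p = g * k"
    using p(2) by (auto simp: E_def elim: dvdE)
  from irreducibleD[OF p(1) this] show False
  proof
    assume "is_unit g"
    then have "E g * E (1 div g) = 1"
      by (simp flip: E.hom_mult add: E.hom_1)
    with g(2) show False
      by simp
  next
    assume "is_unit k"
    then have "p dvd c"
      using \<open>p = g * k\<close> g_dvd[OF \<open>E c = 0\<close>] by (metis dvd_trans mult_unit_dvd_iff)
    with \<open>\<not> p dvd c\<close> show False ..
  qed
qed

definition polys_below :: "nat \<Rightarrow> 'a::zero poly set" where
  "polys_below n = {a. \<forall>i\<ge>n. coeff a i = 0}"

lemma degree_less_if_in_polys_below:
  assumes "a \<in> polys_below n" "a \<noteq> 0"
  shows "degree a < n"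
proof (rule ccontr)
  assume "\<not> degree a < n"
  then have "lead_coeff a = 0"
    using assms(1) by (simp add: polys_below_def)
  with assms(2) show False
    by simp
qed

lemma polys_below_Suc: "polys_below (Suc n) = (\<lambda>(c, a). pCons c a) ` (UNIV \<times> polys_below n)"
proof (intro equalityI subsetI)
  fix x :: "'a poly"
  assume x: "x \<in> polys_below (Suc n)"
  obtain c a where "x = pCons c a"
    by (cases x)
  moreover from x this have "a \<in> polys_below n"
    by (auto simp: polys_below_def)
  ultimately show "x \<in> (\<lambda>(c, a). pCons c a) ` (UNIV \<times> polys_below n)"
    by auto
qed (auto simp: polys_below_def coeff_pCons split: nat.split)

lemma card_polys_below: "card (polys_below n :: 'a::{finite,zero} poly set) = CARD('a) ^ n"
proof (induction n)
  case 0
  have "polys_below 0 = {0 :: 'a poly}"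
    by (auto simp: polys_below_def poly_eq_iff)
  then show ?case
    by simp
next
  case (Suc n)
  have "inj_on (\<lambda>(c, a). pCons c a) (UNIV \<times> (polys_below n :: 'a poly set))"
    by (auto simp: inj_on_def)
  then show ?case
    by (simp add: polys_below_Suc card_image card_cartesian_product Suc)
qed

lemma degree_le_if_power_card_power_fixed:
  fixes \<iota> :: "'a::{finite,field} \<Rightarrow> 'b::field"
  assumes \<iota>: "comm_ring_hom \<iota>" and p: "irreducible p" "poly (map_poly \<iota> p) \<theta> = 0"
    and \<theta>: "\<theta> ^ (CARD('a) ^ w) = \<theta>" and "w > 0"
  shows "degree p \<le> w"
proof -
  let ?q = "CARD('a)" and ?n = "degree p"
  define E where "E c = poly (map_poly \<iota> c) \<theta>" for c
  interpret E: comm_ring_hom E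
    unfolding E_def using \<iota> by (rule comm_ring_hom_poly_map_poly)
  have "?q \<le> ?q ^ w"
    using \<open>w > 0\<close> by (simp add: self_le_power)
  then have "?q ^ w \<ge> 2"
    using card_finite_field_ge_2[where 'a='a] by linarith
  have E_fixed: "E ` polys_below ?n \<subseteq> {x. x ^ (?q ^ w) = x}"
    using poly_map_poly_power_card_power[OF \<iota>] \<theta> by (auto simp: E_def)
  have "inj_on E (polys_below ?n)"
  proof (rule inj_onI, rule ccontr)
    fix a b assume ab: "a \<in> polys_below ?n" "b \<in> polys_below ?n" "E a = E b" "a \<noteq> b"
    then have "degree (a - b) < ?n"
      by (intro degree_less_if_in_polys_below) (auto simp: polys_below_def)
    then have "\<not> p dvd a - b"
      using ab(4) p(1) by (metis dvd_imp_degree_le eq_iff_diff_eq_0 not_le)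
    then have "E (a - b) \<noteq> 0"
      unfolding E_def by (rule poly_map_poly_nonzero_if_not_dvd_irreducible[OF \<iota> p])
    with ab(3) show False
      by (simp add: E.hom_diff)
  qed
  then have "?q ^ ?n = card (E ` polys_below ?n)"
    by (simp add: card_image card_polys_below)
  also have "\<dots> \<le> card {x::'b. x ^ (?q ^ w) = x}"
    using E_fixed by (intro card_mono finite_power_eq_self \<open>?q ^ w \<ge> 2\<close>)
  also have "\<dots> \<le> ?q ^ w"
    using \<open>?q ^ w \<ge> 2\<close> by (rule card_power_eq_self_le)
  finally show ?thesis
    using card_finite_field_ge_2[where 'a='a] by (simp add: power_le_imp_le_exp)
qed

section \<open>Ore polynomials\<close>

lemma coeff_ore_mult:
  assumes "q > 0"
  shows "coeff (ore_mult q A B) n = (\<Sum>i\<le>n. coeff A i * coeff B (n - i) ^ (q ^ i))"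
proof -
  let ?T = "\<lambda>i. coeff A i * coeff B (n - i) ^ (q ^ i)"
  have "(\<Sum>j\<le>degree B. coeff (monom (coeff A i * coeff B j ^ (q ^ i)) (i + j)) n)
      = (if i \<le> n then ?T i else 0)" for i
  proof (cases "i \<le> n")
    case True
    then have "(\<Sum>j\<le>degree B. coeff (monom (coeff A i * coeff B j ^ (q ^ i)) (i + j)) n)
        = (\<Sum>j\<le>degree B. if j = n - i then coeff A i * coeff B j ^ (q ^ i) else 0)"
      by (intro sum.cong) (auto simp: coeff_monom)
    with True assms show ?thesis
      by (auto simp: coeff_eq_0)
  qed auto
  then have "coeff (ore_mult q A B) n = (\<Sum>i\<le>degree A. if i \<le> n then ?T i else 0)"
    by (simp add: ore_mult_def coeff_sum)
  also have "\<dots> = (\<Sum>i\<le>n. ?T i)"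
    using assms by (auto simp: sum.If_cases coeff_eq_0 le_degree intro!: sum.mono_neutral_cong)
  finally show ?thesis .
qed

lemma ore_mult_const_left:
  assumes "q > 0"
  shows "ore_mult q [:c:] B = smult c B"
proof (rule poly_eqI)
  fix n
  have "coeff (ore_mult q [:c:] B) n = (\<Sum>i\<le>n. if i = 0 then c * coeff B n else 0)"
    unfolding coeff_ore_mult[OF assms] by (intro sum.cong) (auto simp: coeff_pCons split: nat.split)
  then show "coeff (ore_mult q [:c:] B) n = coeff (smult c B) n"
    by simp
qed

lemma coeff_ore_mult_low:
  assumes "q > 0" and A: "\<forall>j<s. coeff A j = 0" and B: "\<forall>j<t. coeff B j = 0" and "n \<le> s + t"
  shows "coeff (ore_mult q A B) n = (if n = s + t then coeff A s * coeff B t ^ (q ^ s) else 0)"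
proof -
  have "coeff A i * coeff B (n - i) ^ (q ^ i) =
      (if i = s then (if n = s + t then coeff A s * coeff B t ^ (q ^ s) else 0) else 0)"
    if "i \<le> n" for i
    using assms that by (cases "i < s"; cases "n - i < t") auto
  then have "coeff (ore_mult q A B) n = (\<Sum>i\<le>n. if i = s then
      (if n = s + t then coeff A s * coeff B t ^ (q ^ s) else 0) else 0)"
    unfolding coeff_ore_mult[OF \<open>q > 0\<close>] by (intro sum.cong) simp_all
  with \<open>n \<le> s + t\<close> show ?thesis
    by simp
qed

lemma coeff_ore_mult_high:
  assumes "q > 0" and "n \<ge> degree A + degree B"
  shows "coeff (ore_mult q A B) n =
    (if n = degree A + degree B then lead_coeff A * lead_coeff B ^ (q ^ degree A) else 0)"
proof -
  have "coeff A i * coeff B (n - i) ^ (q ^ i) = (if i = degree A then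
      (if n = degree A + degree B then lead_coeff A * lead_coeff B ^ (q ^ degree A) else 0) else 0)"
    if "i \<le> n" for i
    using assms that by (cases "degree A < i"; cases "degree B < n - i") (auto simp: coeff_eq_0)
  then have "coeff (ore_mult q A B) n = (\<Sum>i\<le>n. if i = degree A then
      (if n = degree A + degree B then lead_coeff A * lead_coeff B ^ (q ^ degree A) else 0) else 0)"
    unfolding coeff_ore_mult[OF \<open>q > 0\<close>] by (intro sum.cong) simp_all
  with \<open>n \<ge> degree A + degree B\<close> show ?thesis
    by simp
qed

lemma
  assumes "q > 0" "A \<noteq> 0" "B \<noteq> 0"
  shows degree_ore_mult: "degree (ore_mult q A B) = degree A + degree B"
    and lead_coeff_ore_mult: "lead_coeff (ore_mult q A B) = lead_coeff A * lead_coeff B ^ (q ^ degree A)"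
proof -
  have "degree (ore_mult q A B) \<le> degree A + degree B"
    by (rule degree_le) (auto simp: coeff_ore_mult_high[OF \<open>q > 0\<close>])
  moreover have "coeff (ore_mult q A B) (degree A + degree B) \<noteq> 0"
    using assms by (simp add: coeff_ore_mult_high)
  ultimately show "degree (ore_mult q A B) = degree A + degree B"
    by (simp add: le_antisym le_degree)
  then show "lead_coeff (ore_mult q A B) = lead_coeff A * lead_coeff B ^ (q ^ degree A)"
    using assms by (simp add: coeff_ore_mult_high)
qed

lemma ore_mult_eq_0_iff:
  assumes "q > 0"
  shows "ore_mult q A B = 0 \<longleftrightarrow> A = 0 \<or> B = 0"
proof (cases "A = 0 \<or> B = 0")
  case True
  moreover have "ore_mult q 0 B = 0"
    by (simp add: ore_mult_def)
  moreover have "ore_mult q A 0 = 0"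
    using assms by (simp add: poly_eq_iff coeff_ore_mult power_0_left)
  ultimately show ?thesis
    by auto
next
  case False
  then have "lead_coeff (ore_mult q A B) \<noteq> 0"
    using assms by (simp add: lead_coeff_ore_mult)
  with False show ?thesis
    by auto
qed

definition tau_order :: "'a::zero poly \<Rightarrow> nat" where
  "tau_order A = (LEAST j. coeff A j \<noteq> 0)"

lemma coeff_less_tau_order: "j < tau_order A \<Longrightarrow> coeff A j = 0"
  unfolding tau_order_def using not_less_Least by blast

lemma coeff_tau_order: "A \<noteq> 0 \<Longrightarrow> coeff A (tau_order A) \<noteq> 0"
  unfolding tau_order_def by (rule LeastI_ex) (auto simp: poly_eq_iff)

lemma tau_order_le_degree: "A \<noteq> 0 \<Longrightarrow> tau_order A \<le> degree A"
  unfolding tau_order_def by (rule Least_le) simp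

lemma tau_order_eqI: "\<forall>j<n. coeff A j = 0 \<Longrightarrow> coeff A n \<noteq> 0 \<Longrightarrow> tau_order A = n"
  unfolding tau_order_def by (rule Least_equality) (auto simp: not_less[symmetric])

lemma tau_order_smult:
  fixes A :: "'a::idom poly"
  shows "c \<noteq> 0 \<Longrightarrow> tau_order (smult c A) = tau_order A"
  by (simp add: tau_order_def)

lemma monom_if_tau_order_eq_degree:
  assumes "tau_order A = degree A"
  shows "A = monom (lead_coeff A) (degree A)"
proof (rule poly_eqI)
  fix n
  show "coeff A n = coeff (monom (lead_coeff A) (degree A)) n"
    using coeff_less_tau_order[of n A] coeff_eq_0[of A n] assms
    by (cases n "degree A" rule: linorder_cases) auto
qed

lemma
  assumes "q > 0" "A \<noteq> 0" "B \<noteq> 0"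
  shows tau_order_ore_mult: "tau_order (ore_mult q A B) = tau_order A + tau_order B"
    and coeff_ore_mult_tau_order: "coeff (ore_mult q A B) (tau_order A + tau_order B) =
      coeff A (tau_order A) * coeff B (tau_order B) ^ (q ^ tau_order A)"
proof -
  have low: "coeff (ore_mult q A B) n = (if n = tau_order A + tau_order B
      then coeff A (tau_order A) * coeff B (tau_order B) ^ (q ^ tau_order A) else 0)"
    if "n \<le> tau_order A + tau_order B" for n
    using that by (intro coeff_ore_mult_low \<open>q > 0\<close>) (auto intro: coeff_less_tau_order)
  then show "coeff (ore_mult q A B) (tau_order A + tau_order B) =
      coeff A (tau_order A) * coeff B (tau_order B) ^ (q ^ tau_order A)"
    by simp
  with assms show "tau_order (ore_mult q A B) = tau_order A + tau_order B"
    by (intro tau_order_eqI) (auto simp: low coeff_tau_order)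
qed

section \<open>The quotient of F_q[X,Y] by \<xi> and X\<close>

definition eval_X_0 :: "'a::comm_ring_1 poly poly \<Rightarrow> 'a poly" where
  "eval_X_0 P = map_poly (\<lambda>c. coeff c 0) P"

interpretation eval_X_0: comm_ring_hom eval_X_0
  unfolding eval_X_0_def[abs_def]
  by (rule comm_ring_hom.comm_ring_hom_map_poly[OF comm_ring_hom_coeff_0])

lemma eval_X_0_const_poly: "eval_X_0 (map_poly (\<lambda>c. [:c:]) r) = r"
  unfolding eval_X_0_def by (subst map_poly_map_poly) (auto simp: o_def)

lemma eval_X_0_varX [simp]: "eval_X_0 varX = 0"
  by (simp add: eval_X_0_def varX_def map_poly_pCons)

lemma varX_dvd_if_eval_X_0_eq_0:
  fixes D :: "'a::field poly poly"
  assumes "eval_X_0 D = 0"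
  shows "D = map_poly (\<lambda>c. c div [:0, 1:]) D * varX"
proof (rule poly_eqI)
  fix i
  have "poly (coeff D i) 0 = 0"
    using arg_cong[OF assms, of "\<lambda>P. coeff P i"]
    by (simp add: eval_X_0_def coeff_map_poly poly_0_coeff_0)
  then have "[:0, 1:] dvd coeff D i"
    by (simp add: poly_eq_0_iff_dvd)
  then show "coeff D i = coeff (map_poly (\<lambda>c. c div [:0, 1:]) D * varX) i"
    using dvd_mult_div_cancel[of "[:0, 1:]" "coeff D i"] by (simp add: varX_def coeff_map_poly)
qed

lemma ideal_varX_iff:
  fixes \<xi> u v :: "'a::field poly poly"
  shows "(\<exists>r s. u - v = r * \<xi> + s * varX) \<longleftrightarrow> eval_X_0 \<xi> dvd eval_X_0 u - eval_X_0 v"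
proof
  assume "\<exists>r s. u - v = r * \<xi> + s * varX"
  then obtain r s where "u - v = r * \<xi> + s * varX"
    by blast
  then have "eval_X_0 u - eval_X_0 v = eval_X_0 r * eval_X_0 \<xi>"
    by (metis eval_X_0.hom_add eval_X_0.hom_diff eval_X_0.hom_mult eval_X_0_varX
        add_0_right mult_zero_right)
  then show "eval_X_0 \<xi> dvd eval_X_0 u - eval_X_0 v"
    by simp
next
  assume "eval_X_0 \<xi> dvd eval_X_0 u - eval_X_0 v"
  then obtain r where r: "eval_X_0 u - eval_X_0 v = eval_X_0 \<xi> * r"
    by (auto elim: dvdE)
  define R where "R = map_poly (\<lambda>c. [:c:]) r"
  have "eval_X_0 (u - v - R * \<xi>) = 0"
    using r by (simp add: eval_X_0.hom_diff eval_X_0.hom_mult R_def eval_X_0_const_poly)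
  then have "u - v - R * \<xi> = map_poly (\<lambda>c. c div [:0, 1:]) (u - v - R * \<xi>) * varX"
    by (rule varX_dvd_if_eval_X_0_eq_0)
  then have "u - v = R * \<xi> + map_poly (\<lambda>c. c div [:0, 1:]) (u - v - R * \<xi>) * varX"
    by (simp add: algebra_simps)
  then show "\<exists>r s. u - v = r * \<xi> + s * varX"
    by blast
qed

lemma card_quotient_kernel: "card (UNIV // {(u, v). F u = F v}) = card (range F)"
proof -
  have "UNIV // {(u, v). F u = F v} = (\<lambda>z. F -` {z}) ` range F"
    by (auto simp: quotient_def vimage_def eq_commute)
  moreover have "inj_on (\<lambda>z. F -` {z}) (range F)"
    by (rule inj_onI) blast
  ultimately show ?thesis
    by (simp add: card_image)
qed

lemma quot_card_varX:
  fixes f h :: "'a::{finite,field} poly"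
  shows "quot_card [:-f, h, 1:] varX = CARD('a) ^ 2"
proof -
  define \<xi> where "\<xi> = [:-f, h, 1:]"
  define \<xi>\<^sub>0 where "\<xi>\<^sub>0 = eval_X_0 \<xi>"
  have "degree \<xi>\<^sub>0 = 2"
    by (simp add: \<xi>\<^sub>0_def \<xi>_def eval_X_0_def map_poly_pCons)
  then have "\<xi>\<^sub>0 \<noteq> 0"
    by auto
  \<comment> \<open>F_q[X,Y]/(\<xi>, X) is F_q[Y] modulo the monic quadratic \<xi>(0, Y)\<close>
  define F where "F u = eval_X_0 u mod \<xi>\<^sub>0" for u
  have "range F = polys_below 2"
  proof (intro equalityI subsetI)
    fix y assume "y \<in> range F"
    then have "y = 0 \<or> degree y < 2"
      using degree_mod_less'[OF \<open>\<xi>\<^sub>0 \<noteq> 0\<close>] \<open>degree \<xi>\<^sub>0 = 2\<close> by (auto simp: F_def)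
    then show "y \<in> polys_below 2"
      by (auto simp: polys_below_def coeff_eq_0)
  next
    fix y :: "'a poly" assume "y \<in> polys_below 2"
    then have "degree y < 2"
      by (cases "y = 0") (auto intro: degree_less_if_in_polys_below)
    then have "F (map_poly (\<lambda>c. [:c:]) y) = y"
      by (simp add: F_def eval_X_0_const_poly mod_poly_less \<open>degree \<xi>\<^sub>0 = 2\<close>)
    then show "y \<in> range F"
      by (metis rangeI)
  qed
  have "(\<exists>r s. u - v = r * \<xi> + s * varX) \<longleftrightarrow> F u = F v" for u v
    by (simp add: ideal_varX_iff F_def \<xi>\<^sub>0_def mod_eq_dvd_iff eval_X_0.hom_diff)
  then show ?thesis
    unfolding quot_card_def \<xi>_def[symmetric] by (simp add: card_quotient_kernel \<open>range F = polys_below 2\<close> card_polys_below)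
qed

section \<open>Frobenius exponents and the norm\<close>

lemma inj_on_double_mod:
  assumes "odd (d::nat)"
  shows "inj_on (\<lambda>i. 2 * i mod d) {..<d}"
proof (rule inj_onI)
  fix i j assume ij: "i \<in> {..<d}" "j \<in> {..<d}" and "2 * i mod d = 2 * j mod d"
  then have "int d dvd int (2 * i) - int (2 * j)"
    by (metis mod_eq_dvd_iff of_nat_mod)
  then have "int d dvd 2 * (int i - int j)"
    by (simp add: algebra_simps)
  moreover have "coprime (int d) 2"
    using assms by simp
  ultimately have "int d dvd int i - int j"
    by (metis coprime_dvd_mult_right_iff mult.commute)
  with ij show "i = j"
    using dvd_imp_le_int[of "int i - int j" "int d"] by fastforce
qed

lemma power_power_eq_self:
  fixes y :: "'a::monoid_mult"
  assumes "y ^ e = y"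
  shows "y ^ (e ^ k) = y"
  by (induction k) (simp_all add: power_Suc2 power_mult assms)

lemma power_power_mod:
  fixes x :: "'a::monoid_mult"
  assumes "x ^ (q ^ d) = x"
  shows "x ^ (q ^ n) = x ^ (q ^ (n mod d))"
proof -
  let ?y = "x ^ (q ^ (n mod d))"
  have "?y ^ (q ^ d) = ?y"
    by (metis assms mult.commute power_mult)
  then have "?y ^ ((q ^ d) ^ (n div d)) = ?y"
    by (rule power_power_eq_self)
  then show ?thesis
    by (metis mod_mult_div_eq power_add power_mult)
qed

lemma power_sum_double_powers_eq_fnorm:
  fixes x :: "'a::field"
  assumes "x ^ (q ^ d) = x" "odd d"
  shows "x ^ (\<Sum>i<d. q ^ (2 * i)) = fnorm q d x"
proof -
  have "x ^ (\<Sum>i<d. q ^ (2 * i)) = (\<Prod>i<d. x ^ (q ^ (2 * i)))"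
    by (rule power_sum)
  also have "\<dots> = (\<Prod>i<d. x ^ (q ^ (2 * i mod d)))"
    by (intro prod.cong refl power_power_mod[OF assms(1)])
  also have "\<dots> = (\<Prod>j\<in>(\<lambda>i. 2 * i mod d) ` {..<d}. x ^ (q ^ j))"
    by (simp add: prod.reindex inj_on_double_mod[OF assms(2)])
  also have "(\<lambda>i. 2 * i mod d) ` {..<d} = {..<d}"
    using assms(2) by (intro endo_inj_surj inj_on_double_mod) auto
  finally show ?thesis
    by (simp add: fnorm_def)
qed

lemma power_eq_self_if_power_square_eq_self:
  fixes x :: "'a::monoid_mult"
  assumes "x ^ (q ^ 2) = x" "x ^ (q ^ d) = x" "odd d"
  shows "x ^ q = x"
proof -
  obtain k where "d = Suc (2 * k)"
    using \<open>odd d\<close> by (auto elim: oddE)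
  then have "q ^ d = (q ^ 2) ^ k * q"
    by (simp add: power_Suc2 power_mult)
  then have "x = (x ^ ((q ^ 2) ^ k)) ^ q"
    using assms(2) by (simp flip: power_mult)
  then show ?thesis
    by (simp add: power_power_eq_self[OF assms(1)])
qed

section \<open>Rank-one Drinfeld modules on the curve\<close>

locale dr1_module = \<iota>: comm_ring_hom \<iota>
  for \<iota> :: "'k::{finite,field} \<Rightarrow> 'l::{finite,field}" +
  fixes q d m :: nat and p h f :: "'k poly" and \<alpha> :: 'k and \<xi> :: "'k poly poly"
    and \<theta> :: 'l and \<phi> :: "'k poly poly \<Rightarrow> 'l poly"
  assumes q: "q = CARD('k)"
    and d: "odd d" and m: "m dvd d"
    and p: "lead_coeff p = 1" "irreducible p" "degree p = d div m"
    and \<alpha>: "\<alpha> \<noteq> 0" and f: "f = smult \<alpha> (p ^ m)"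
    and h: "degree h \<le> (d - 1) div 2" "\<not> p dvd h"
    and \<xi>: "\<xi> = [:- f, h, 1:]"
    and \<iota>_inj: "inj \<iota>"
    and L: "CARD('l) = q ^ d"
    and \<theta>: "poly (map_poly \<iota> p) \<theta> = 0"
    and \<phi>: "\<phi> \<in> Dr1 q \<iota> \<theta> \<xi>"
begin

lemma q_pos: "q > 0"
  using card_finite_field_ge_2[where 'a='k] q by simp

lemma p_nonzero: "p \<noteq> 0"
  using p(2) by auto

lemma iota_eq_0_iff [simp]: "\<iota> c = 0 \<longleftrightarrow> c = 0"
  using inj_eq[OF \<iota>_inj, of c 0] by simp

lemma phi_add: "\<phi> (P + Q) = \<phi> P + \<phi> Q"
  using \<phi> by (simp add: Dr1_def)

lemma phi_mult: "\<phi> (P * Q) = ore_mult q (\<phi> P) (\<phi> Q)"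
  using \<phi> by (simp add: Dr1_def)

lemma phi_const: "\<phi> [:[:c:]:] = [:\<iota> c:]"
  using \<phi> by (simp add: Dr1_def)

lemma phi_xi: "\<phi> \<xi> = 0"
  using \<phi> by (simp add: Dr1_def)

lemma coeff_phi_0: "coeff (\<phi> P) 0 = gam \<iota> \<theta> P"
  using \<phi> by (simp add: Dr1_def)

lemma degree_phi: "\<not> \<xi> dvd P \<Longrightarrow> real (degree (\<phi> P)) = log (real q) (real (quot_card \<xi> P))"
  using \<phi> by (simp add: Dr1_def)

lemma phi_0: "\<phi> 0 = 0"
  using phi_add[of 0 0] by (metis add_cancel_right_right add_0)

lemma phi_diff: "\<phi> (P - Q) = \<phi> P - \<phi> Q"
  using phi_add[of "P - Q" Q] by (simp add: algebra_simps)

lemma phi_1: "\<phi> 1 = 1"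
  using phi_const[of 1] by (simp add: \<iota>.hom_1 one_pCons)

lemma phi_commute: "ore_mult q (\<phi> P) (\<phi> Q) = ore_mult q (\<phi> Q) (\<phi> P)"
  by (metis phi_mult mult.commute)

lemma phi_const_pCons: "\<phi> [:pCons c a:] = [:\<iota> c:] + ore_mult q (\<phi> varX) (\<phi> [:a:])"
proof -
  have "[:pCons c a:] = [:[:c:]:] + varX * [:a:]"
    by (simp add: varX_def)
  then show ?thesis
    by (simp only: phi_add phi_mult phi_const)
qed

lemma degree_phi_varX: "degree (\<phi> varX) = 2"
proof -
  have "\<not> \<xi> dvd varX"
  proof
    assume "\<xi> dvd varX"
    then obtain r where r: "varX = \<xi> * r"
      by (auto elim: dvdE)
    then have "r \<noteq> 0"
      by (auto simp: varX_def)
    moreover have "\<xi> \<noteq> 0" "degree \<xi> = 2"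
      using \<xi> by auto
    ultimately have "degree (\<xi> * r) = 2 + degree r"
      by (simp add: degree_mult_eq)
    with r show False
      by (metis add_is_0 degree_pCons_0 varX_def zero_neq_numeral)
  qed
  then have "real (degree (\<phi> varX)) = log (real q) (real q ^ 2)"
    using degree_phi quot_card_varX[of f h] \<xi> q by simp
  also have "\<dots> = 2"
    using card_finite_field_ge_2[where 'a='k] q by (simp add: log_nat_power)
  finally show ?thesis
    by simp
qed

definition \<Delta> :: 'l where
  "\<Delta> = lead_coeff (\<phi> varX)"

lemma phi_varX_nonzero: "\<phi> varX \<noteq> 0"
  using degree_phi_varX by auto

lemma Delta_nonzero: "\<Delta> \<noteq> 0"
  using phi_varX_nonzero by (simp add: \<Delta>_def)

lemma gam_varX: "gam \<iota> \<theta> varX = \<theta>"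
  by (simp add: gam_def varX_def map_poly_pCons \<iota>.hom_1)

lemma phi_varX: "\<phi> varX = [:\<theta>, coeff (\<phi> varX) 1, \<Delta>:]"
proof -
  have "coeff (\<phi> varX) 0 = \<theta>"
    by (simp add: coeff_phi_0 gam_varX)
  then show ?thesis
    using degree_phi_varX
    by (auto simp: poly_eq_iff \<Delta>_def coeff_pCons coeff_eq_0 numeral_2_eq_2 split: nat.split)
qed

definition lead_exponent :: "nat \<Rightarrow> nat" where
  "lead_exponent n = (\<Sum>i<n. q ^ (2 * i))"

lemma lead_exponent_Suc: "lead_exponent (Suc n) = 1 + q ^ 2 * lead_exponent n"
  unfolding lead_exponent_def sum.lessThan_Suc_shift
  by (simp add: sum_distrib_left power2_eq_square mult.assoc)

lemma phi_const_poly: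
  assumes "a \<noteq> 0"
  shows "degree (\<phi> [:a:]) = 2 * degree a \<and>
    lead_coeff (\<phi> [:a:]) = \<iota> (lead_coeff a) * \<Delta> ^ lead_exponent (degree a)"
  using assms
proof (induction a rule: pCons_induct)
  case (pCons c a)
  show ?case
  proof (cases "a = 0")
    case True
    then show ?thesis
      by (simp add: phi_const lead_exponent_def)
  next
    case False
    let ?A = "\<phi> [:a:]"
    have IH: "degree ?A = 2 * degree a" "lead_coeff ?A = \<iota> (lead_coeff a) * \<Delta> ^ lead_exponent (degree a)"
      using pCons.IH[OF False] by auto
    then have "lead_coeff ?A \<noteq> 0"
      using False Delta_nonzero by simp
    then have "?A \<noteq> 0"
      by auto
    then have deg: "degree (ore_mult q (\<phi> varX) ?A) = 2 + 2 * degree a"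
      and lc: "lead_coeff (ore_mult q (\<phi> varX) ?A) = \<Delta> * lead_coeff ?A ^ (q ^ 2)"
      using degree_ore_mult[OF q_pos phi_varX_nonzero] lead_coeff_ore_mult[OF q_pos phi_varX_nonzero]
      by (metis IH(1) degree_phi_varX, metis \<Delta>_def degree_phi_varX)
    have "\<iota> (lead_coeff a) ^ (q ^ 2) = \<iota> (lead_coeff a)"
      using q by (simp flip: \<iota>.hom_power)
    then have "lead_coeff (ore_mult q (\<phi> varX) ?A) =
        \<iota> (lead_coeff a) * \<Delta> ^ (1 + q ^ 2 * lead_exponent (degree a))"
      by (simp add: lc IH(2) power_mult_distrib power_add mult_ac flip: power_mult)
    with deg False show ?thesis
      by (simp add: phi_const_pCons lead_exponent_Suc degree_add_eq_right lead_coeff_add_le)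
  qed
qed simp

lemma phi_relation_varY: "ore_mult q (\<phi> varY + \<phi> [:h:]) (\<phi> varY) = \<phi> [:f:]"
proof -
  have "\<xi> = (varY + [:h:]) * varY - [:f:]"
    by (simp add: \<xi> varY_def)
  then show ?thesis
    using phi_xi by (simp add: phi_diff phi_mult phi_add)
qed

lemma
  shows degree_phi_f: "degree (\<phi> [:f:]) = 2 * d"
    and lead_coeff_phi_f: "lead_coeff (\<phi> [:f:]) = \<iota> \<alpha> * \<Delta> ^ lead_exponent d"
    and phi_f_nonzero: "\<phi> [:f:] \<noteq> 0"
proof -
  have "m \<noteq> 0"
    using m d by (metis dvd_0_left_iff odd_pos less_irrefl)
  then have "f \<noteq> 0" "degree f = d"
    using f \<alpha> p m p_nonzero by (simp_all add: degree_power_eq)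
  moreover have "lead_coeff f = \<alpha>"
    using f p(1) by (simp add: lead_coeff_power)
  ultimately show "degree (\<phi> [:f:]) = 2 * d"
    and "lead_coeff (\<phi> [:f:]) = \<iota> \<alpha> * \<Delta> ^ lead_exponent d"
    using phi_const_poly[of f] by metis+
  then show "\<phi> [:f:] \<noteq> 0"
    using \<alpha> Delta_nonzero by auto
qed

lemma degree_phi_h_less: "degree (\<phi> [:h:]) < d"
proof (cases "h = 0")
  case False
  then have "degree (\<phi> [:h:]) = 2 * degree h"
    using phi_const_poly by simp
  with h(1) d show ?thesis
    by (auto elim!: oddE)
qed (use d phi_0 in \<open>simp add: odd_pos\<close>)

lemma degree_phi_varY: "degree (\<phi> varY) = d"
proof -
  let ?Y = "\<phi> varY" and ?H = "\<phi> [:h:]"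
  have "ore_mult q (?Y + ?H) ?Y \<noteq> 0"
    using phi_f_nonzero phi_relation_varY by simp
  then have "?Y + ?H \<noteq> 0" "?Y \<noteq> 0"
    by (simp_all add: ore_mult_eq_0_iff[OF q_pos])
  then have sum: "degree (?Y + ?H) + degree ?Y = 2 * d"
    using degree_ore_mult[OF q_pos] phi_relation_varY degree_phi_f by metis
  show ?thesis
  proof (cases "degree ?H < degree ?Y")
    case True
    with sum show ?thesis
      by (simp add: degree_add_eq_left)
  next
    case False
    then have "degree (?Y + ?H) \<le> degree ?H"
      using degree_add_le_max[of ?Y ?H] by simp
    with False sum degree_phi_h_less show ?thesis
      by linarith
  qed
qed

lemma phi_varY_nonzero: "\<phi> varY \<noteq> 0"
  using degree_phi_varY d by (auto simp: odd_pos)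

lemma coeff_phi_varY_0: "coeff (\<phi> varY) 0 = 0"
  by (simp add: coeff_phi_0 gam_def varY_def)

lemma phi_const_nonzero:
  assumes "a \<noteq> 0"
  shows "\<phi> [:a:] \<noteq> 0"
proof -
  have "lead_coeff (\<phi> [:a:]) = \<iota> (lead_coeff a) * \<Delta> ^ lead_exponent (degree a)"
    using phi_const_poly[OF assms] by blast
  also have "\<dots> \<noteq> 0"
    using assms Delta_nonzero by simp
  finally show ?thesis
    by auto
qed

lemma coeff_phi_const_0: "coeff (\<phi> [:a:]) 0 = poly (map_poly \<iota> a) \<theta>"
  by (simp add: coeff_phi_0 gam_def)

lemma coeff_phi_h_0_nonzero: "coeff (\<phi> [:h:]) 0 \<noteq> 0"
  unfolding coeff_phi_const_0
  by (rule poly_map_poly_nonzero_if_not_dvd_irreducible[OF \<iota>.comm_ring_hom_axioms p(2) \<theta> h(2)])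

lemma tau_order_phi_const_power:
  assumes "a \<noteq> 0"
  shows "tau_order (\<phi> [:a ^ k:]) = k * tau_order (\<phi> [:a:])"
proof (induction k)
  case 0
  then show ?case
    using phi_1 by (simp add: one_pCons[symmetric] tau_order_eqI)
next
  case (Suc k)
  have "\<phi> [:a ^ Suc k:] = ore_mult q (\<phi> [:a:]) (\<phi> [:a ^ k:])"
    by (simp flip: phi_mult add: mult.commute)
  with Suc assms show ?case
    by (simp add: tau_order_ore_mult[OF q_pos] phi_const_nonzero)
qed

lemma theta_power_tau_order:
  assumes "a \<noteq> 0"
  shows "\<theta> ^ (q ^ tau_order (\<phi> [:a:])) = \<theta>"
proof -
  let ?A = "\<phi> [:a:]" and ?w = "tau_order (\<phi> [:a:])"
  have "coeff (\<phi> varX) 0 = \<theta>"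
    by (subst phi_varX) simp
  moreover have "coeff (ore_mult q ?A (\<phi> varX)) ?w = coeff (ore_mult q (\<phi> varX) ?A) ?w"
    by (simp only: phi_commute)
  ultimately have "coeff ?A ?w * \<theta> ^ (q ^ ?w) = \<theta> * coeff ?A ?w"
    using coeff_ore_mult_low[OF q_pos, of ?w ?A 0 "\<phi> varX" ?w]
      coeff_ore_mult_low[OF q_pos, of 0 "\<phi> varX" ?w ?A ?w]
    by (simp add: coeff_less_tau_order)
  then show ?thesis
    using coeff_tau_order[OF phi_const_nonzero[OF assms]] by simp
qed

lemma d_div_m_le_tau_order_phi_p: "d div m \<le> tau_order (\<phi> [:p:])"
proof -
  have "coeff (\<phi> [:p:]) 0 = 0"
    by (simp add: coeff_phi_const_0 \<theta>)
  then have "tau_order (\<phi> [:p:]) > 0"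
    using coeff_tau_order[OF phi_const_nonzero[OF p_nonzero]] by (metis neq0_conv)
  then show ?thesis
    using degree_le_if_power_card_power_fixed[OF \<iota>.comm_ring_hom_axioms p(2) \<theta>]
      theta_power_tau_order[OF p_nonzero] p(3) q by simp
qed

lemma tau_order_phi_f: "tau_order (\<phi> [:f:]) = m * tau_order (\<phi> [:p:])"
proof -
  have "\<phi> [:f:] = \<phi> ([:[:\<alpha>:]:] * [:p ^ m:])"
    by (simp add: f)
  also have "\<dots> = smult (\<iota> \<alpha>) (\<phi> [:p ^ m:])"
    by (simp only: phi_mult phi_const ore_mult_const_left[OF q_pos])
  finally show ?thesis
    using \<alpha> p_nonzero by (simp add: tau_order_smult tau_order_phi_const_power)
qed

lemma tau_order_phi_f_eq_phi_varY: "tau_order (\<phi> [:f:]) = tau_order (\<phi> varY)"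
proof -
  let ?YH = "\<phi> varY + \<phi> [:h:]"
  have "coeff ?YH 0 \<noteq> 0"
    using coeff_phi_h_0_nonzero by (simp add: coeff_phi_varY_0)
  then have "?YH \<noteq> 0" "tau_order ?YH = 0"
    by (metis coeff_0, simp add: tau_order_eqI)
  have "tau_order (\<phi> [:f:]) = tau_order (ore_mult q ?YH (\<phi> varY))"
    by (simp only: phi_relation_varY)
  also have "\<dots> = tau_order ?YH + tau_order (\<phi> varY)"
    by (rule tau_order_ore_mult[OF q_pos \<open>?YH \<noteq> 0\<close> phi_varY_nonzero])
  finally show ?thesis
    using \<open>tau_order ?YH = 0\<close> by simp
qed

lemma tau_order_phi_varY: "tau_order (\<phi> varY) = d"
proof -
  have "d = m * (d div m)"
    using m by simp
  also have "\<dots> \<le> tau_order (\<phi> varY)"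
    using d_div_m_le_tau_order_phi_p tau_order_phi_f tau_order_phi_f_eq_phi_varY by simp
  finally show ?thesis
    using tau_order_le_degree[OF phi_varY_nonzero] degree_phi_varY by simp
qed

lemma phi_varY: "\<phi> varY = monom (lead_coeff (\<phi> varY)) d"
  using monom_if_tau_order_eq_degree[of "\<phi> varY"] tau_order_phi_varY degree_phi_varY by simp

lemma power_card_field_eq_self: "(x :: 'l) ^ (q ^ d) = x"
  using finite_field_power_card[of x] L by simp

lemma lead_coeff_phi_varY_power: "lead_coeff (\<phi> varY) ^ q = lead_coeff (\<phi> varY)"
proof -
  let ?c = "lead_coeff (\<phi> varY)"
  have "lead_coeff (ore_mult q (\<phi> varX) (\<phi> varY)) = lead_coeff (ore_mult q (\<phi> varY) (\<phi> varX))"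
    by (simp only: phi_commute)
  moreover have "lead_coeff (ore_mult q (\<phi> varX) (\<phi> varY)) = \<Delta> * ?c ^ (q ^ 2)"
    using lead_coeff_ore_mult[OF q_pos phi_varX_nonzero phi_varY_nonzero]
    by (metis \<Delta>_def degree_phi_varX)
  moreover have "lead_coeff (ore_mult q (\<phi> varY) (\<phi> varX)) = ?c * \<Delta> ^ (q ^ d)"
    using lead_coeff_ore_mult[OF q_pos phi_varY_nonzero phi_varX_nonzero]
    by (metis \<Delta>_def degree_phi_varY)
  ultimately have "\<Delta> * ?c ^ (q ^ 2) = ?c * \<Delta> ^ (q ^ d)"
    by simp
  then have "?c ^ (q ^ 2) = ?c"
    using Delta_nonzero by (simp add: power_card_field_eq_self mult.commute)
  then show ?thesis
    using power_eq_self_if_power_square_eq_self power_card_field_eq_self d by blast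
qed

lemma lead_coeff_phi_varY_square: "lead_coeff (\<phi> varY) ^ 2 = \<iota> \<alpha> * fnorm q d \<Delta>"
proof -
  let ?Y = "\<phi> varY" and ?H = "\<phi> [:h:]"
  have "degree (?Y + ?H) = d" "lead_coeff (?Y + ?H) = lead_coeff ?Y"
    using degree_phi_h_less degree_phi_varY
    by (simp add: degree_add_eq_left, metis add.commute lead_coeff_add_le)
  then have "lead_coeff (\<phi> [:f:]) = lead_coeff ?Y * lead_coeff ?Y ^ (q ^ d)"
    using lead_coeff_ore_mult[OF q_pos _ phi_varY_nonzero, of "?Y + ?H"] phi_relation_varY
    by (metis leading_coeff_0_iff phi_varY_nonzero)
  then show ?thesis
    using lead_coeff_phi_f power_sum_double_powers_eq_fnorm[OF power_card_field_eq_self d]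
    by (simp add: power_card_field_eq_self power2_eq_square lead_exponent_def)
qed

lemma coeff_phi_f_d: "coeff (\<phi> [:f:]) d = coeff (\<phi> [:h:]) 0 * lead_coeff (\<phi> varY)"
proof -
  have "\<forall>j<d. coeff (\<phi> varY) j = 0"
    using coeff_less_tau_order tau_order_phi_varY by blast
  then show ?thesis
    using coeff_ore_mult_low[OF q_pos, of 0 "\<phi> varY + \<phi> [:h:]" d "\<phi> varY" d]
    by (simp add: phi_relation_varY coeff_phi_varY_0 degree_phi_varY)
qed

lemma dr1_module_unique:
  assumes "\<psi> \<in> Dr1 q \<iota> \<theta> \<xi>" and "\<psi> varX = \<phi> varX"
  shows "\<psi> = \<phi>"
proof -
  interpret \<psi>: dr1_module \<iota> q d m p h f \<alpha> \<xi> \<theta> \<psi>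
    using dr1_module_axioms assms(1) unfolding dr1_module_def dr1_module_axioms_def by blast
  have const: "\<psi> [:a:] = \<phi> [:a:]" for a
    by (induction a) (simp_all add: \<psi>.phi_const_pCons phi_const_pCons assms(2) \<psi>.phi_0 phi_0)
  \<comment> \<open>the leading coefficient of \<phi>(Y) is read off the coefficient of \<tau>^d in \<phi>(f)\<close>
  have "lead_coeff (\<psi> varY) = lead_coeff (\<phi> varY)"
    using \<psi>.coeff_phi_f_d coeff_phi_f_d coeff_phi_h_0_nonzero by (simp add: const)
  then have Y: "\<psi> varY = \<phi> varY"
    by (metis \<psi>.phi_varY phi_varY)
  show ?thesis
  proof
    fix P
    show "\<psi> P = \<phi> P"
    proof (induction P)
      case (pCons a P)
      have "pCons a P = [:a:] + varY * P"
        by (simp add: varY_def)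
      then show ?case
        by (simp only: \<psi>.phi_add phi_add \<psi>.phi_mult phi_mult const Y pCons.IH)
    qed (simp add: \<psi>.phi_0 phi_0)
  qed
qed

end

theorem lemma5:
  fixes \<iota> :: "'k::{finite,field} \<Rightarrow> 'l::{finite,field}"
    and q d m :: nat and p h f :: "'k poly" and \<alpha> :: 'k and \<xi> :: "'k poly poly"
    and \<theta> :: 'l and \<phi> :: "'k poly poly \<Rightarrow> 'l poly"
  assumes q: "q = CARD('k)"
    and d: "odd d" "d \<ge> 5" and m: "m > 0" "m dvd d"
    and p: "lead_coeff p = 1" "irreducible p" "Polynomial.degree p = d div m"
    and \<alpha>: "\<alpha> \<noteq> 0" and f: "f = Polynomial.smult \<alpha> (p ^ m)"
    and h: "h \<noteq> 0" "Polynomial.degree h \<le> (d - 1) div 2" "\<not> p dvd h"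
    and \<xi>: "\<xi> = [:- f, h, 1:]"
    and nonsing: "\<forall>x y :: 'k alg_closure.
        \<not> (poly (poly (map_poly (map_poly to_ac) \<xi>) [:y:]) x = 0 \<and>
           poly (poly (map_poly (map_poly to_ac) (map_poly pderiv \<xi>)) [:y:]) x = 0 \<and>
           poly (poly (map_poly (map_poly to_ac) (pderiv \<xi>)) [:y:]) x = 0)"
    and \<iota>: "inj \<iota>" "\<iota> 1 = 1" "\<forall>a b. \<iota> (a + b) = \<iota> a + \<iota> b" "\<forall>a b. \<iota> (a * b) = \<iota> a * \<iota> b"
    and L: "CARD('l) = q ^ d"
    and \<theta>: "poly (map_poly \<iota> p) \<theta> = 0"
    and \<phi>: "\<phi> \<in> Dr1 q \<iota> \<theta> \<xi>"
  shows "\<exists>\<Delta> g \<beta>. \<Delta> \<noteq> 0 \<and> \<beta> \<noteq> 0 \<and>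
           \<phi> varX = [:gam \<iota> \<theta> varX, g, \<Delta>:] \<and>
           \<phi> varY = Polynomial.monom (\<iota> \<beta>) d \<and>
           \<iota> (\<beta> ^ 2) = \<iota> \<alpha> * fnorm q d \<Delta> \<and>
           (\<forall>\<psi> \<in> Dr1 q \<iota> \<theta> \<xi>. \<psi> varX = \<phi> varX \<longrightarrow> \<psi> = \<phi>)"
proof -
  have hom: "comm_ring_hom \<iota>"
    using \<iota>(2-4) by unfold_locales auto
  interpret dr1_module \<iota> q d m p h f \<alpha> \<xi> \<theta> \<phi>
    using hom q d m p \<alpha> f h \<xi> \<iota>(1) L \<theta> \<phi> unfolding dr1_module_def dr1_module_axioms_def by blast
  obtain \<beta> where \<beta>: "\<iota> \<beta> = lead_coeff (\<phi> varY)"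
    using power_card_eq_self_imp_in_range[OF hom \<iota>(1)] lead_coeff_phi_varY_power q by force
  show ?thesis
  proof (intro exI conjI)
    show "\<Delta> \<noteq> 0"
      by (rule Delta_nonzero)
    show "\<beta> \<noteq> 0"
      using \<beta> phi_varY_nonzero by auto
    show "\<phi> varX = [:gam \<iota> \<theta> varX, coeff (\<phi> varX) 1, \<Delta>:]"
      using phi_varX by (simp add: gam_varX)
    show "\<phi> varY = monom (\<iota> \<beta>) d"
      using \<beta> phi_varY by simp
    show "\<iota> (\<beta> ^ 2) = \<iota> \<alpha> * fnorm q d \<Delta>"
      using \<beta> lead_coeff_phi_varY_square by (simp add: \<iota>.hom_power)
    show "\<forall>\<psi>\<in>Dr1 q \<iota> \<theta> \<xi>. \<psi> varX = \<phi> varX \<longrightarrow> \<psi> = \<phi>"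
      using dr1_module_unique by blast
  qed
qed

end
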